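(* Let $\mathcal H_1,\mathcal H_2$ be Hilbert spaces with unitaries $U_1\in B(\mathcal H_1)$, $U_2\in B(\mathcal H_2)$, and let $\phi:B(\mathcal H_1)\to B(\mathcal H_2)$ be a linear map such that for all $V\in B(\mathcal H_1)$, $$\phi(U_1^*V)=U_2^*\phi(V)\quad\text{and}\quad\phi(U_1V)=U_2\phi(V).$$ Then $\phi$ is completely positive if and only if $\phi$ is $(U_1,U_2)$-CP.
   Context: An operator $V$ on a Hilbert space with a given unitary $U$ is $U$-positive if $U^*V\ge0$. For $l\in\mathbb N$, $U^l=\mathrm{diag}(U,\dots,U)$ acting on $\mathcal H^l$. A linear map $\phi:B(\mathcal H_1)\to B(\mathcal H_2)$ is $(U_1,U_2)$-CP if for every $l\in\mathbb N$ and every $V=[V_{ij}]\in M_l(B(\mathcal H_1))$ with $(U_1^l)^*V\ge0$, one has $(U_2^l)^*[\phi(V_{ij})]\ge0$. *)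

theory Defs
  imports Complex_Main
begin

class hilbert_cx = ab_group_add +
  fixes scaleC :: "complex \<Rightarrow> 'a \<Rightarrow> 'a"
    and cinner :: "'a \<Rightarrow> 'a \<Rightarrow> complex"
  assumes scaleC_add_right: "scaleC a (x + y) = scaleC a x + scaleC a y"
    and scaleC_add_left: "scaleC (a + b) x = scaleC a x + scaleC b x"
    and scaleC_scaleC: "scaleC a (scaleC b x) = scaleC (a * b) x"
    and scaleC_one: "scaleC 1 x = x"
    and cinner_conj: "cinner x y = cnj (cinner y x)"
    and cinner_add_right: "cinner x (y + z) = cinner x y + cinner x z"
    and cinner_scaleC_right: "cinner x (scaleC c y) = c * cinner x y"
    and cinner_ge_zero: "0 \<le> Re (cinner x x)"
    and cinner_eq_zero_iff: "cinner x x = 0 \<longleftrightarrow> x = 0"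
    and complete: "(\<forall>e>0. \<exists>N::nat. \<forall>m\<ge>N. \<forall>n\<ge>N. Re (cinner (X m - X n) (X m - X n)) < e)
        \<Longrightarrow> (\<exists>L. \<forall>e>0. \<exists>N::nat. \<forall>n\<ge>N. Re (cinner (X n - L) (X n - L)) < e)"

definition cnorm :: "'a::hilbert_cx \<Rightarrow> real" where
  "cnorm x = sqrt (Re (cinner x x))"

definition bop :: "('a::hilbert_cx \<Rightarrow> 'a) set" where
  "bop = {A. (\<forall>x y. A (x + y) = A x + A y) \<and> (\<forall>c x. A (scaleC c x) = scaleC c (A x))
             \<and> (\<exists>K. \<forall>x. cnorm (A x) \<le> K * cnorm x)}"

definition adj :: "('a::hilbert_cx \<Rightarrow> 'a) \<Rightarrow> ('a \<Rightarrow> 'a)" where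
  "adj A = (THE B. B \<in> bop \<and> (\<forall>x y. cinner (A x) y = cinner x (B y)))"

definition unitary :: "('a::hilbert_cx \<Rightarrow> 'a) \<Rightarrow> bool" where
  "unitary U \<longleftrightarrow> U \<in> bop \<and> U \<circ> adj U = id \<and> adj U \<circ> U = id"

definition cnonneg :: "complex \<Rightarrow> bool" where
  "cnonneg z \<longleftrightarrow> Im z = 0 \<and> 0 \<le> Re z"

definition opmat_pos :: "nat \<Rightarrow> (nat \<Rightarrow> nat \<Rightarrow> ('a::hilbert_cx \<Rightarrow> 'a)) \<Rightarrow> bool" where
  "opmat_pos l V \<longleftrightarrow> (\<forall>x::nat \<Rightarrow> 'a. cnonneg (\<Sum>i<l. \<Sum>j<l. cinner (x i) (V i j (x j))))"

definition opmat :: "nat \<Rightarrow> (nat \<Rightarrow> nat \<Rightarrow> ('a::hilbert_cx \<Rightarrow> 'a)) \<Rightarrow> bool" where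
  "opmat l V \<longleftrightarrow> (\<forall>i<l. \<forall>j<l. V i j \<in> bop)"

text \<open>(U^l)^* V, where U^l = diag(U,...,U): entries U^* V_ij.\<close>
definition diag_adj_mult :: "('a::hilbert_cx \<Rightarrow> 'a) \<Rightarrow> (nat \<Rightarrow> nat \<Rightarrow> ('a \<Rightarrow> 'a)) \<Rightarrow> (nat \<Rightarrow> nat \<Rightarrow> ('a \<Rightarrow> 'a))" where
  "diag_adj_mult U V = (\<lambda>i j. adj U \<circ> V i j)"

definition bop_linear_map :: "(('a::hilbert_cx \<Rightarrow> 'a) \<Rightarrow> ('b::hilbert_cx \<Rightarrow> 'b)) \<Rightarrow> bool" where
  "bop_linear_map \<phi> \<longleftrightarrow> (\<forall>A\<in>bop. \<phi> A \<in> bop)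
     \<and> (\<forall>A\<in>bop. \<forall>B\<in>bop. \<phi> (\<lambda>x. A x + B x) = (\<lambda>y. \<phi> A y + \<phi> B y))
     \<and> (\<forall>A\<in>bop. \<forall>c. \<phi> (\<lambda>x. scaleC c (A x)) = (\<lambda>y. scaleC c (\<phi> A y)))"

definition completely_positive :: "(('a::hilbert_cx \<Rightarrow> 'a) \<Rightarrow> ('b::hilbert_cx \<Rightarrow> 'b)) \<Rightarrow> bool" where
  "completely_positive \<phi> \<longleftrightarrow> (\<forall>l::nat. \<forall>V. opmat l V \<and> opmat_pos l V
      \<longrightarrow> opmat_pos l (\<lambda>i j. \<phi> (V i j)))"

definition U_CP :: "('a::hilbert_cx \<Rightarrow> 'a) \<Rightarrow> ('b::hilbert_cx \<Rightarrow> 'b) \<Rightarrow> (('a \<Rightarrow> 'a) \<Rightarrow> ('b \<Rightarrow> 'b)) \<Rightarrow> bool" where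
  "U_CP U1 U2 \<phi> \<longleftrightarrow> (\<forall>l::nat. \<forall>V. opmat l V \<and> opmat_pos l (diag_adj_mult U1 V)
      \<longrightarrow> opmat_pos l (diag_adj_mult U2 (\<lambda>i j. \<phi> (V i j))))"

end

(* Because U\<^sub>1\<^sup>* U\<^sub>1 = 1, every operator matrix satisfies V = (U\<^sub>1\<^sup>l)\<^sup>* [U\<^sub>1 V\<^sub>i\<^sub>j], and the
   intertwining identities move U\<^sub>1\<^sup>* and U\<^sub>1 through \<phi> entrywise.  So positivity of V and of
   (U\<^sub>1\<^sup>l)\<^sup>* V are exchanged before and after applying \<phi>, and the two notions of complete
   positivity coincide.  The one analytic input is that U\<^sub>1\<^sup>* is again bounded, i.e. that
   bounded operators have bounded adjoints; this rests on the Riesz representation theorem,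
   obtained from the element of minimal norm in the closed affine hyperplane {f = 1}. *)

theory Submission
  imports Defs
begin

lemma scaleC_zero_left [simp]: "scaleC 0 (x::'a::hilbert_cx) = 0"
  using scaleC_add_left [of 0 0 x] by simp

lemma cinner_zero_right [simp]: "cinner (x::'a::hilbert_cx) 0 = 0"
  using cinner_add_right [of x 0 0] by simp

lemma cinner_zero_left [simp]: "cinner 0 (x::'a::hilbert_cx) = 0"
  using cinner_conj [of 0 x] by simp

lemma cinner_add_left: "cinner ((x::'a::hilbert_cx) + y) z = cinner x z + cinner y z"
  by (metis cinner_conj cinner_add_right complex_cnj_add)

lemma cinner_scaleC_left: "cinner (scaleC c (x::'a::hilbert_cx)) y = cnj c * cinner x y"
  by (metis cinner_conj cinner_scaleC_right complex_cnj_mult)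

lemma cinner_minus_right: "cinner (x::'a::hilbert_cx) (- y) = - cinner x y"
  using cinner_add_right [of x y "- y"] by (simp add: add_eq_0_iff)

lemma cinner_minus_left: "cinner (- (x::'a::hilbert_cx)) y = - cinner x y"
  using cinner_add_left [of x "- x" y] by (simp add: add_eq_0_iff)

lemma cinner_diff_right: "cinner (x::'a::hilbert_cx) (y - z) = cinner x y - cinner x z"
  using cinner_add_right [of x y "- z"] by (simp add: cinner_minus_right)

lemma cinner_diff_left: "cinner ((x::'a::hilbert_cx) - y) z = cinner x z - cinner y z"
  using cinner_add_left [of x "- y" z] by (simp add: cinner_minus_left)

lemma cinner_self_eq_Re: "cinner (x::'a::hilbert_cx) x = complex_of_real (Re (cinner x x))"
proof -
  have "Im (cinner x x) = 0"
    using arg_cong [OF cinner_conj [of x x], of Im] by simp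
  then show ?thesis by (simp add: complex_eq_iff)
qed

lemma cinner_eqI: "(\<And>x. cinner x a = cinner x b) \<Longrightarrow> a = (b::'a::hilbert_cx)"
  by (metis cinner_diff_right cinner_eq_zero_iff eq_iff_diff_eq_0)

lemma Re_cinner_commute: "Re (cinner (y::'a::hilbert_cx) x) = Re (cinner x y)"
  by (subst cinner_conj) simp

lemma cnorm_nonneg: "0 \<le> cnorm (x::'a::hilbert_cx)"
  by (simp add: cnorm_def cinner_ge_zero)

lemma cnorm_power2: "(cnorm (x::'a::hilbert_cx))\<^sup>2 = Re (cinner x x)"
  by (simp add: cnorm_def cinner_ge_zero)

lemma cnorm_eq_0_iff: "cnorm (x::'a::hilbert_cx) = 0 \<longleftrightarrow> x = 0"
  by (metis cnorm_def cinner_self_eq_Re cinner_eq_zero_iff of_real_0 real_sqrt_eq_zero_cancel_iff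
      cinner_zero_left zero_complex.sel(1))

lemma cnorm_add_scaleC_power2:
  "(cnorm ((x::'a::hilbert_cx) + scaleC s y))\<^sup>2
     = (cnorm x)\<^sup>2 + 2 * Re (s * cinner x y) + (cmod s)\<^sup>2 * (cnorm y)\<^sup>2"
proof -
  have expand: "cinner (x + scaleC s y) (x + scaleC s y)
      = cinner x x + cnj s * cinner y x + (s * cinner x y + s * (cnj s * cinner y y))"
    by (simp only: cinner_add_left cinner_add_right cinner_scaleC_left cinner_scaleC_right
        distrib_left)
  have "Re (cnj s * cinner y x) = Re (s * cinner x y)"
    by (subst cinner_conj) simp
  moreover have "Re (s * (cnj s * cinner y y)) = (cmod s)\<^sup>2 * Re (cinner y y)"
    by (subst cinner_self_eq_Re) (simp add: mult.assoc [symmetric] complex_mult_cnj cmod_power2)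
  ultimately show ?thesis
    unfolding cnorm_power2 expand plus_complex.sel by linarith
qed

lemma cnorm_scaleC: "cnorm (scaleC s (x::'a::hilbert_cx)) = cmod s * cnorm x"
proof -
  have "(cnorm (scaleC s x))\<^sup>2 = (cmod s * cnorm x)\<^sup>2"
    using cnorm_add_scaleC_power2 [of 0 s x] by (simp add: power_mult_distrib cnorm_def)
  then show ?thesis
    by (simp add: cnorm_nonneg)
qed

lemma cnorm_minus_commute: "cnorm ((x::'a::hilbert_cx) - y) = cnorm (y - x)"
  by (simp add: cnorm_def cinner_diff_left cinner_diff_right)

lemma cauchy_schwarz: "cmod (cinner (x::'a::hilbert_cx) y) \<le> cnorm x * cnorm y"
proof (cases "y = 0")
  case True
  then show ?thesis by (simp add: cnorm_nonneg)
next
  case False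
  define b where "b = (cnorm y)\<^sup>2"
  define w where "w = cinner x y"
  define s where "s = - cnj w / complex_of_real b"
  have b: "b > 0"
    using False cnorm_eq_0_iff unfolding b_def by (metis zero_less_power2)
  have "cnj w * w = complex_of_real ((cmod w)\<^sup>2)"
    by (metis complex_norm_square mult.commute)
  then have sw: "Re (s * w) = - (cmod w)\<^sup>2 / b"
    unfolding s_def by simp
  have s: "(cmod s)\<^sup>2 = (cmod w)\<^sup>2 / b\<^sup>2"
    unfolding s_def using b by (simp add: norm_divide power_divide)
  \<comment> \<open>\<open>s\<close> minimizes \<open>\<parallel>x + s y\<parallel>\<close>.\<close>
  have "0 \<le> (cnorm (x + scaleC s y))\<^sup>2"
    by simp
  also have "\<dots> = (cnorm x)\<^sup>2 - 2 * (cmod w)\<^sup>2 / b + (cmod w)\<^sup>2 / b\<^sup>2 * b"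
    unfolding cnorm_add_scaleC_power2 w_def [symmetric] b_def [symmetric] sw s by simp
  also have "\<dots> = (cnorm x)\<^sup>2 - (cmod w)\<^sup>2 / b"
    using b by (simp add: power2_eq_square)
  finally have "(cmod w)\<^sup>2 \<le> (cnorm x)\<^sup>2 * b"
    using b by (simp add: field_simps)
  then have "(cmod w)\<^sup>2 \<le> (cnorm x * cnorm y)\<^sup>2"
    by (simp add: b_def power_mult_distrib)
  then show ?thesis
    unfolding w_def by (meson cnorm_nonneg mult_nonneg_nonneg power2_le_imp_le)
qed

lemma cnorm_triangle: "cnorm ((x::'a::hilbert_cx) + y) \<le> cnorm x + cnorm y"
proof -
  have "Re (cinner x y) \<le> cnorm x * cnorm y"
    using cauchy_schwarz [of x y] complex_Re_le_cmod order_trans by blast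
  then have "(cnorm (x + y))\<^sup>2 \<le> (cnorm x + cnorm y)\<^sup>2"
    using cnorm_add_scaleC_power2 [of x 1 y] by (simp add: scaleC_one power2_sum)
  then show ?thesis
    by (meson add_nonneg_nonneg cnorm_nonneg power2_le_imp_le)
qed

lemma parallelogram_midpoint:
  "(cnorm ((x::'a::hilbert_cx) - y))\<^sup>2
     = 2 * (cnorm x)\<^sup>2 + 2 * (cnorm y)\<^sup>2 - 4 * (cnorm (scaleC (1/2) (x + y)))\<^sup>2"
  by (simp add: cnorm_scaleC cnorm_power2 Re_cinner_commute
      cinner_add_left cinner_add_right cinner_diff_left cinner_diff_right field_simps)

lemma cnorm_Cauchy_convergent:
  fixes X :: "nat \<Rightarrow> 'a::hilbert_cx"
  assumes b: "b \<longlonglongrightarrow> 0" and bound: "\<And>m n. (cnorm (X m - X n))\<^sup>2 \<le> b m + b n"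
  shows "\<exists>L. (\<lambda>n. cnorm (X n - L)) \<longlonglongrightarrow> 0"
proof -
  have "\<exists>N. \<forall>m\<ge>N. \<forall>n\<ge>N. Re (cinner (X m - X n) (X m - X n)) < e" if "e > 0" for e
  proof -
    obtain N where N: "\<And>n. n \<ge> N \<Longrightarrow> b n < e / 2"
      using order_tendstoD(2) [OF b, of "e / 2"] \<open>e > 0\<close> by (auto simp: eventually_sequentially)
    have "(cnorm (X m - X n))\<^sup>2 < e" if "m \<ge> N" "n \<ge> N" for m n
      using bound [of m n] N [OF \<open>m \<ge> N\<close>] N [OF \<open>n \<ge> N\<close>] by linarith
    then show ?thesis
      unfolding cnorm_power2 by blast
  qed
  then obtain L where L: "\<And>e. e > 0 \<Longrightarrow> \<exists>N. \<forall>n\<ge>N. (cnorm (X n - L))\<^sup>2 < e"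
    using complete [of X] unfolding cnorm_power2 by blast
  have "(\<lambda>n. cnorm (X n - L)) \<longlonglongrightarrow> 0"
    unfolding LIMSEQ_iff
  proof (intro allI impI)
    fix r :: real
    assume "r > 0"
    then obtain N where "\<forall>n\<ge>N. (cnorm (X n - L))\<^sup>2 < r\<^sup>2"
      using L [of "r\<^sup>2"] by auto
    then show "\<exists>N. \<forall>n\<ge>N. norm (cnorm (X n - L) - 0) < r"
      using \<open>r > 0\<close> by (metis abs_of_nonneg cnorm_nonneg diff_zero less_imp_le power2_less_imp_less
          real_norm_def)
  qed
  then show ?thesis ..
qed

lemma cnorm_le_limit:
  fixes X :: "nat \<Rightarrow> 'a::hilbert_cx"
  assumes "(\<lambda>n. cnorm (X n - L)) \<longlonglongrightarrow> 0" and "(\<lambda>n. cnorm (X n)) \<longlonglongrightarrow> c"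
  shows "cnorm L \<le> c"
proof -
  have "(\<lambda>n. cnorm (X n) + cnorm (L - X n)) \<longlonglongrightarrow> c + 0"
    using assms by (intro tendsto_add) (simp_all add: cnorm_minus_commute)
  then show ?thesis
    using cnorm_triangle [of "X n" "L - X n" for n] by (intro LIMSEQ_le_const) auto
qed

lemma cnorm_minimum_exists:
  fixes A :: "'a::hilbert_cx set"
  assumes "A \<noteq> {}"
    and midpoint: "\<And>x y. x \<in> A \<Longrightarrow> y \<in> A \<Longrightarrow> scaleC (1/2) (x + y) \<in> A"
    and closed: "\<And>X L. (\<And>n. X n \<in> A) \<Longrightarrow> (\<lambda>n. cnorm (X n - L)) \<longlonglongrightarrow> 0 \<Longrightarrow> L \<in> A"
  shows "\<exists>L\<in>A. \<forall>x\<in>A. cnorm L \<le> cnorm x"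
proof -
  define d where "d = Inf ((\<lambda>x. (cnorm x)\<^sup>2) ` A)"
  define \<epsilon> where "\<epsilon> n = inverse (real (Suc n))" for n
  have d_le: "d \<le> (cnorm x)\<^sup>2" if "x \<in> A" for x
    unfolding d_def using that by (intro cInf_lower) (auto intro: bdd_belowI [of _ 0])
  have "\<exists>x\<in>A. (cnorm x)\<^sup>2 < d + \<epsilon> n" for n
    using cInf_lessD [of "(\<lambda>x. (cnorm x)\<^sup>2) ` A" "d + \<epsilon> n"] \<open>A \<noteq> {}\<close>
    by (auto simp: d_def \<epsilon>_def)
  then obtain X where X_in: "\<And>n. X n \<in> A" and X_less: "\<And>n. (cnorm (X n))\<^sup>2 < d + \<epsilon> n"
    by metis
  \<comment> \<open>The midpoint of \<open>X m\<close> and \<open>X n\<close> lies in \<open>A\<close>, so the parallelogram law makes the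
    minimizing sequence Cauchy.\<close>
  have "(cnorm (X m - X n))\<^sup>2 \<le> 2 * \<epsilon> m + 2 * \<epsilon> n" for m n
    using parallelogram_midpoint [of "X m" "X n"] d_le [OF midpoint [OF X_in [of m] X_in [of n]]]
      X_less [of m] X_less [of n] by linarith
  moreover have "(\<lambda>n. 2 * \<epsilon> n) \<longlonglongrightarrow> 0"
    unfolding \<epsilon>_def using tendsto_mult_right_zero [OF LIMSEQ_inverse_real_of_nat] by simp
  ultimately obtain L where L: "(\<lambda>n. cnorm (X n - L)) \<longlonglongrightarrow> 0"
    using cnorm_Cauchy_convergent by blast
  have "(\<lambda>n. (cnorm (X n))\<^sup>2) \<longlonglongrightarrow> d"
  proof (rule real_tendsto_sandwich [where f = "\<lambda>_. d" and h = "\<lambda>n. d + \<epsilon> n"])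
    show "(\<lambda>n. d + \<epsilon> n) \<longlonglongrightarrow> d"
      unfolding \<epsilon>_def using tendsto_add [OF tendsto_const LIMSEQ_inverse_real_of_nat] by simp
  qed (auto intro!: always_eventually X_in d_le less_imp_le [OF X_less])
  from tendsto_real_sqrt [OF this] have "(\<lambda>n. cnorm (X n)) \<longlonglongrightarrow> sqrt d"
    by (simp add: cnorm_nonneg)
  with L have "cnorm L \<le> sqrt d"
    by (rule cnorm_le_limit)
  moreover have "sqrt d \<le> cnorm x" if "x \<in> A" for x
    using real_sqrt_le_mono [OF d_le [OF that]] by (simp add: cnorm_nonneg)
  ultimately have "\<forall>x\<in>A. cnorm L \<le> cnorm x"
    by (meson order_trans)
  moreover have "L \<in> A"
    using closed X_in L .
  ultimately show ?thesis ..
qed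

lemma cnorm_minimum_orthogonal:
  fixes A :: "'a::hilbert_cx set"
  assumes min: "\<forall>x\<in>A. cnorm L \<le> cnorm x" and line: "\<And>s. L + scaleC s v \<in> A"
  shows "cinner L v = 0"
proof -
  define w where "w = cinner L v"
  define r where "r = 1 / ((cnorm v)\<^sup>2 + 1)"
  \<comment> \<open>For \<open>0 < r < 1 / \<parallel>v\<parallel>\<^sup>2\<close>, moving from \<open>L\<close> by \<open>s = - r cnj w\<close> would decrease the norm
    unless \<open>w = 0\<close>.\<close>
  define s where "s = - (complex_of_real r * cnj w)"
  have r: "r > 0" "r * (cnorm v)\<^sup>2 < 1"
    unfolding r_def by (simp_all add: field_simps add_pos_nonneg)
  have "cnj w * w = complex_of_real ((cmod w)\<^sup>2)"
    by (metis complex_norm_square mult.commute)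
  then have sw: "Re (s * w) = - r * (cmod w)\<^sup>2"
    unfolding s_def by (simp add: mult.assoc)
  have "(cnorm L)\<^sup>2 \<le> (cnorm (L + scaleC s v))\<^sup>2"
    using min line [of s] by (simp add: cnorm_nonneg power_mono)
  also have "\<dots> = (cnorm L)\<^sup>2 - 2 * r * (cmod w)\<^sup>2 + r\<^sup>2 * (cmod w)\<^sup>2 * (cnorm v)\<^sup>2"
    unfolding cnorm_add_scaleC_power2 w_def [symmetric] sw
    using r by (simp add: s_def norm_mult power_mult_distrib)
  finally have "r * (cmod w)\<^sup>2 * (2 - r * (cnorm v)\<^sup>2) \<le> 0"
    by (simp add: algebra_simps power2_eq_square)
  with r have "(cmod w)\<^sup>2 \<le> 0"
    by (simp add: mult_le_0_iff)
  then show ?thesis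
    unfolding w_def by simp
qed

lemma bounded_functional_tendsto:
  fixes f :: "'a::hilbert_cx \<Rightarrow> complex"
  assumes add: "\<And>x y. f (x + y) = f x + f y"
    and bounded: "\<And>x. cmod (f x) \<le> K * cnorm x"
    and L: "(\<lambda>n. cnorm (X n - L)) \<longlonglongrightarrow> 0"
  shows "(\<lambda>n. f (X n)) \<longlonglongrightarrow> f L"
proof -
  have diff: "f (x - y) = f x - f y" for x y
    using add [of "x - y" y] by simp
  have "norm (f (X n) - f L) \<le> norm (cnorm (X n - L)) * K" for n
    using bounded [of "X n - L"] cnorm_nonneg [of "X n - L"]
    by (simp only: diff real_norm_def abs_of_nonneg mult.commute [of K])
  then have "(\<lambda>n. f (X n) - f L) \<longlonglongrightarrow> 0"
    by (intro tendsto_0_le [OF L] always_eventually allI)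
  then show ?thesis
    by (simp add: LIM_zero_iff)
qed

lemma riesz_representation:
  fixes f :: "'a::hilbert_cx \<Rightarrow> complex"
  assumes add: "\<And>x y. f (x + y) = f x + f y"
    and scale: "\<And>c x. f (scaleC c x) = c * f x"
    and bounded: "\<And>x. cmod (f x) \<le> K * cnorm x"
  shows "\<exists>z. \<forall>x. f x = cinner z x"
proof (cases "\<forall>x. f x = 0")
  case True
  then show ?thesis by (intro exI [of _ 0]) simp
next
  case False
  then obtain u where "f u \<noteq> 0" by blast
  have diff: "f (x - y) = f x - f y" for x y
    using add [of "x - y" y] by simp
  define A where "A = {x. f x = 1}"
  have "scaleC (inverse (f u)) u \<in> A"
    unfolding A_def using \<open>f u \<noteq> 0\<close> by (simp add: scale)
  moreover have "scaleC (1/2) (x + y) \<in> A" if "x \<in> A" "y \<in> A" for x y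
    using that unfolding A_def by (simp add: scale add)
  moreover have "L \<in> A" if X: "\<And>n. X n \<in> A" and L: "(\<lambda>n. cnorm (X n - L)) \<longlonglongrightarrow> 0" for X L
  proof -
    have "(\<lambda>n. 1) \<longlonglongrightarrow> f L"
      using bounded_functional_tendsto [OF add bounded L] X unfolding A_def by simp
    then show ?thesis
      unfolding A_def LIMSEQ_const_iff by simp
  qed
  ultimately obtain L where "L \<in> A" and min: "\<forall>x\<in>A. cnorm L \<le> cnorm x"
    using cnorm_minimum_exists [of A] by blast
  then have fL: "f L = 1"
    unfolding A_def by simp
  have LL: "cinner L L \<noteq> 0"
    using fL scale [of 0 L] by (auto simp: cinner_eq_zero_iff)
  have "f x = cinner (scaleC (inverse (cnj (cinner L L))) L) x" for x
  proof -
    have "cinner L (x - scaleC (f x) L) = 0"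
      using min by (rule cnorm_minimum_orthogonal) (simp add: A_def add diff scale fL)
    then have "cinner L x = f x * cinner L L"
      by (simp add: cinner_diff_right cinner_scaleC_right)
    with LL show ?thesis
      by (simp add: cinner_scaleC_left)
  qed
  then show ?thesis by blast
qed

lemma bop_add: "A \<in> bop \<Longrightarrow> A (x + y) = A x + A y"
  unfolding bop_def by blast

lemma bop_scaleC: "A \<in> bop \<Longrightarrow> A (scaleC c x) = scaleC c (A x)"
  unfolding bop_def by blast

lemma bop_bound_nonneg:
  assumes "A \<in> bop"
  obtains K where "K \<ge> 0" and "\<And>x. cnorm ((A::'a::hilbert_cx \<Rightarrow> 'a) x) \<le> K * cnorm x"
proof -
  obtain K where K: "\<And>x. cnorm (A x) \<le> K * cnorm x"
    using assms unfolding bop_def by blast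
  have "cnorm (A x) \<le> max K 0 * cnorm x" for x
    using K [of x] cnorm_nonneg [of x] by (meson max.cobounded1 mult_right_mono order_trans)
  then show ?thesis
    using that [of "max K 0"] by simp
qed

lemma bop_comp:
  assumes "(A::'a::hilbert_cx \<Rightarrow> 'a) \<in> bop" and "B \<in> bop"
  shows "A \<circ> B \<in> bop"
proof -
  obtain KA where "KA \<ge> 0" and KA: "\<And>x. cnorm (A x) \<le> KA * cnorm x"
    using bop_bound_nonneg [OF assms(1)] by blast
  obtain KB where KB: "\<And>x. cnorm (B x) \<le> KB * cnorm x"
    using assms(2) unfolding bop_def by blast
  have "cnorm (A (B x)) \<le> (KA * KB) * cnorm x" for x
    using KA [of "B x"] mult_left_mono [OF KB [of x] \<open>KA \<ge> 0\<close>] by (simp add: mult.assoc)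
  then show ?thesis
    using assms unfolding bop_def by auto
qed

lemma adjoint_exists:
  assumes U: "(U::'a::hilbert_cx \<Rightarrow> 'a) \<in> bop"
  shows "\<exists>B\<in>bop. \<forall>x y. cinner (U x) y = cinner x (B y)"
proof -
  obtain K where "K \<ge> 0" and K: "\<And>x. cnorm (U x) \<le> K * cnorm x"
    using bop_bound_nonneg [OF U] by blast
  have "\<exists>z. \<forall>x. cinner y (U x) = cinner z x" for y
  proof (rule riesz_representation [where K = "cnorm y * K"])
    show "cmod (cinner y (U x)) \<le> cnorm y * K * cnorm x" for x
      using cauchy_schwarz [of y "U x"] mult_left_mono [OF K [of x] cnorm_nonneg [of y]]
      by (simp add: mult.assoc)
  qed (simp_all add: U bop_add bop_scaleC cinner_add_right cinner_scaleC_right)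
  then obtain B where B': "\<And>x y. cinner y (U x) = cinner (B y) x"
    by metis
  have B: "cinner (U x) y = cinner x (B y)" for x y
    by (subst cinner_conj) (simp add: B' flip: cinner_conj)
  have "B (y + y') = B y + B y'" for y y'
    by (rule cinner_eqI) (simp add: B [symmetric] cinner_add_right)
  moreover have "B (scaleC c y) = scaleC c (B y)" for c y
    by (rule cinner_eqI) (simp add: B [symmetric] cinner_scaleC_right)
  moreover have "cnorm (B y) \<le> K * cnorm y" for y
  proof -
    have "(cnorm (B y))\<^sup>2 \<le> cmod (cinner (U (B y)) y)"
      by (simp add: cnorm_power2 B complex_Re_le_cmod)
    also have "\<dots> \<le> cnorm (U (B y)) * cnorm y"
      by (rule cauchy_schwarz)
    also have "\<dots> \<le> (K * cnorm (B y)) * cnorm y"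
      by (rule mult_right_mono [OF K cnorm_nonneg])
    finally have "cnorm (B y) * cnorm (B y) \<le> cnorm (B y) * (K * cnorm y)"
      by (simp add: power2_eq_square mult_ac)
    then show ?thesis
      using \<open>K \<ge> 0\<close> cnorm_nonneg [of y] cnorm_nonneg [of "B y"]
      by (cases "cnorm (B y) = 0") (simp_all add: mult_le_cancel_left_pos)
  qed
  ultimately have "B \<in> bop"
    unfolding bop_def by blast
  with B show ?thesis by blast
qed

lemma adj_in_bop:
  assumes "(U::'a::hilbert_cx \<Rightarrow> 'a) \<in> bop"
  shows "adj U \<in> bop"
proof -
  have "\<exists>!B. B \<in> bop \<and> (\<forall>x y. cinner (U x) y = cinner x (B y))"
  proof (rule ex_ex1I)
    show "\<exists>B. B \<in> bop \<and> (\<forall>x y. cinner (U x) y = cinner x (B y))"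
      using adjoint_exists [OF assms] by blast
  next
    fix B B'
    assume B: "B \<in> bop \<and> (\<forall>x y. cinner (U x) y = cinner x (B y))"
      and B': "B' \<in> bop \<and> (\<forall>x y. cinner (U x) y = cinner x (B' y))"
    show "B = B'"
    proof (intro ext cinner_eqI)
      fix x y
      have "cinner x (B y) = cinner (U x) y"
        using B by simp
      also have "\<dots> = cinner x (B' y)"
        using B' by simp
      finally show "cinner x (B y) = cinner x (B' y)" .
    qed
  qed
  then show ?thesis
    unfolding adj_def by (rule theI' [THEN conjunct1])
qed

lemma opmat_pos_cong:
  assumes "\<And>i j. i < l \<Longrightarrow> j < l \<Longrightarrow> V i j = W i j"
  shows "opmat_pos l V \<longleftrightarrow> opmat_pos l W"
proof -
  have "(\<Sum>i<l. \<Sum>j<l. cinner (x i) (V i j (x j))) = (\<Sum>i<l. \<Sum>j<l. cinner (x i) (W i j (x j)))"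
    for x :: "nat \<Rightarrow> 'a::hilbert_cx"
    using assms by (intro sum.cong) simp_all
  then show ?thesis
    unfolding opmat_pos_def by simp
qed

lemma opmat_comp_left:
  assumes "(A::'a::hilbert_cx \<Rightarrow> 'a) \<in> bop" and "opmat l V"
  shows "opmat l (\<lambda>i j. A \<circ> V i j)"
  using assms bop_comp unfolding opmat_def by blast

lemma U_CP_if_completely_positive:
  fixes U1 :: "'a::hilbert_cx \<Rightarrow> 'a" and U2 :: "'b::hilbert_cx \<Rightarrow> 'b"
    and \<phi> :: "('a \<Rightarrow> 'a) \<Rightarrow> ('b \<Rightarrow> 'b)"
  assumes "U1 \<in> bop" and CP: "completely_positive \<phi>"
    and adj_comm: "\<forall>V\<in>bop. \<phi> (adj U1 \<circ> V) = adj U2 \<circ> \<phi> V"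
  shows "U_CP U1 U2 \<phi>"
  unfolding U_CP_def
proof (intro allI impI, elim conjE)
  fix l V
  assume V: "opmat l V" and pos: "opmat_pos l (diag_adj_mult U1 V)"
  have "opmat l (diag_adj_mult U1 V)"
    unfolding diag_adj_mult_def using adj_in_bop [OF \<open>U1 \<in> bop\<close>] V by (rule opmat_comp_left)
  with CP pos have "opmat_pos l (\<lambda>i j. \<phi> (diag_adj_mult U1 V i j))"
    unfolding completely_positive_def by blast
  moreover have "opmat_pos l (\<lambda>i j. \<phi> (diag_adj_mult U1 V i j))
      \<longleftrightarrow> opmat_pos l (diag_adj_mult U2 (\<lambda>i j. \<phi> (V i j)))"
    using V adj_comm by (intro opmat_pos_cong) (simp add: opmat_def diag_adj_mult_def)
  ultimately show "opmat_pos l (diag_adj_mult U2 (\<lambda>i j. \<phi> (V i j)))"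
    by blast
qed

lemma completely_positive_if_U_CP:
  fixes U1 :: "'a::hilbert_cx \<Rightarrow> 'a" and U2 :: "'b::hilbert_cx \<Rightarrow> 'b"
    and \<phi> :: "('a \<Rightarrow> 'a) \<Rightarrow> ('b \<Rightarrow> 'b)"
  assumes "U1 \<in> bop" and "adj U1 \<circ> U1 = id" and "adj U2 \<circ> U2 = id"
    and UCP: "U_CP U1 U2 \<phi>" and comm: "\<forall>V\<in>bop. \<phi> (U1 \<circ> V) = U2 \<circ> \<phi> V"
  shows "completely_positive \<phi>"
  unfolding completely_positive_def
proof (intro allI impI, elim conjE)
  fix l and V :: "nat \<Rightarrow> nat \<Rightarrow> 'a \<Rightarrow> 'a"
  assume V: "opmat l V" and pos: "opmat_pos l V"
  \<comment> \<open>Apply the \<open>(U\<^sub>1, U\<^sub>2)\<close>-CP property to \<open>[U\<^sub>1 V\<^sub>i\<^sub>j]\<close>, for which \<open>(U\<^sub>1\<^sup>l)\<^sup>* [U\<^sub>1 V\<^sub>i\<^sub>j] = V\<close>.\<close>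
  have "opmat l (\<lambda>i j. U1 \<circ> V i j)"
    using \<open>U1 \<in> bop\<close> V by (rule opmat_comp_left)
  moreover have "diag_adj_mult U1 (\<lambda>i j. U1 \<circ> V i j) = V"
    unfolding diag_adj_mult_def by (simp add: o_assoc \<open>adj U1 \<circ> U1 = id\<close>)
  ultimately have "opmat_pos l (diag_adj_mult U2 (\<lambda>i j. \<phi> (U1 \<circ> V i j)))"
    using UCP pos unfolding U_CP_def by auto
  moreover have "opmat_pos l (diag_adj_mult U2 (\<lambda>i j. \<phi> (U1 \<circ> V i j)))
      \<longleftrightarrow> opmat_pos l (\<lambda>i j. \<phi> (V i j))"
    using V comm \<open>adj U2 \<circ> U2 = id\<close>
    by (intro opmat_pos_cong) (simp add: opmat_def diag_adj_mult_def o_assoc)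
  ultimately show "opmat_pos l (\<lambda>i j. \<phi> (V i j))"
    by blast
qed

theorem theorem2p3:
  fixes U1 :: "'a::hilbert_cx \<Rightarrow> 'a" and U2 :: "'b::hilbert_cx \<Rightarrow> 'b"
    and \<phi> :: "('a \<Rightarrow> 'a) \<Rightarrow> ('b \<Rightarrow> 'b)"
  assumes "unitary U1" and "unitary U2"
    and "bop_linear_map \<phi>"
    and "\<forall>V\<in>bop. \<phi> (adj U1 \<circ> V) = adj U2 \<circ> \<phi> V"
    and "\<forall>V\<in>bop. \<phi> (U1 \<circ> V) = U2 \<circ> \<phi> V"
  shows "completely_positive \<phi> \<longleftrightarrow> U_CP U1 U2 \<phi>"
proof -
  have "U1 \<in> bop" and "adj U1 \<circ> U1 = id" and "adj U2 \<circ> U2 = id"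
    using assms(1,2) unfolding unitary_def by auto
  then show ?thesis
    using assms(4,5) U_CP_if_completely_positive completely_positive_if_U_CP by blast
qed

end
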